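(* Let $p\geq 5$ be prime, let $v\in\mathbb{R}^p$ have pairwise distinct coordinates, and let $H=(a_1,\dots,a_p)^\perp$ be a hyperplane. Let $\sigma=(ij)(kl)$ with $i,j,k,l$ distinct, and let $\pi$ be a $p$-cycle. Let $G\subset S_p$ be a subgroup containing $\pi$ such that $\dim\mathrm{Span}(Gv)>3$. If $H$ contains $Gv$ and $\sigma Gv$, then $a_i=a_j$ and $a_k=a_l$.
   Context: $S_p$ acts on $\mathbb{R}^p$ by permuting coordinates (the $j$-th coordinate of $\epsilon v$ is $v_{\epsilon^{-1}(j)}$); $Gv=\{gv:g\in G\}$. $(a_1,\dots,a_p)^\perp$ denotes the hyperplane $\{x:\sum_m a_mx_m=0\}$ with $(a_1,\dots,a_p)\neq 0$. *)

theory Defs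
  imports "HOL-Analysis.Analysis" "HOL-Combinatorics.Cycles" "HOL-Computational_Algebra.Primes"
begin

definition perm_act :: "('n::finite \<Rightarrow> 'n) \<Rightarrow> real^'n \<Rightarrow> real^'n" where
  "perm_act \<epsilon> v = (\<chi> j. v $ (inv \<epsilon> j))"

definition perm_subgroup :: "('n \<Rightarrow> 'n) set \<Rightarrow> bool" where
  "perm_subgroup G \<longleftrightarrow> (\<forall>g\<in>G. g permutes UNIV) \<and> id \<in> G \<and>
     (\<forall>g\<in>G. \<forall>h\<in>G. g \<circ> h \<in> G) \<and> (\<forall>g\<in>G. inv g \<in> G)"

definition full_cycle :: "('n::finite \<Rightarrow> 'n) \<Rightarrow> bool" where
  "full_cycle \<pi> \<longleftrightarrow> (\<exists>cs. distinct cs \<and> length cs = CARD('n) \<and> \<pi> = cycle_of_list cs)"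

end

theory Submission
  imports Defs "HOL-Computational_Algebra.Polynomial_Factorial" "HOL-Library.Real_Mod"
begin

text \<open>
  Write c = a_i - a_j and d = a_k - a_l. The two hyperplane conditions together say that every
  x in the orbit Gv satisfies c (x_i - x_j) + d (x_k - x_l) = 0; if c = 0 this already forces
  d = 0 at x = v. Otherwise number the coordinates along the p-cycle pi: as Gv is stable under pi,
  the coordinate sequence y of each x in Gv satisfies the circulant relation
  c (y(t+I) - y(t+J)) + d (y(t+K) - y(t+L)) = 0 on Z/p, so its discrete Fourier coefficient at r
  is annihilated by F(r) = c (z^(rI) - z^(rJ)) + d (z^(rK) - z^(rL)), z a primitive p-th root of
  unity. Eliminating d from F(r) = F(s) = 0 yields an identity between two sums of four powers
  of z. Since 1 + x + ... + x^(p-1) is irreducible (Eisenstein after x -> x + 1), equal sums of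
  powers of z have congruent exponents, and a short computation mod p gives s = r or s = -r.
  So the spectrum of y lies in {0, r0, -r0}, and Gv is contained in the span of the three real
  vectors 1, cos (2 pi r0 q / p), sin (2 pi r0 q / p), against dim Span(Gv) > 3.
\<close>

section \<open>Eisenstein's criterion and the polynomial 1 + x + ... + x^(n-1)\<close>

lemma map_poly_of_int_diff:
  "map_poly (of_int :: int \<Rightarrow> 'a::comm_ring_1) (P - Q) = map_poly of_int P - map_poly of_int Q"
  by (rule poly_eqI) (simp add: coeff_map_poly)

lemma map_poly_of_int_mult:
  "map_poly (of_int :: int \<Rightarrow> 'a::comm_ring_1) (P * Q) = map_poly of_int P * map_poly of_int Q"
  by (rule poly_eqI) (simp add: coeff_map_poly coeff_mult)

lemma map_poly_of_int_smult:
  "map_poly (of_int :: int \<Rightarrow> 'a::comm_ring_1) (smult c Q) = smult (of_int c) (map_poly of_int Q)"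
  by (rule poly_eqI) (simp add: coeff_map_poly)

lemma eisenstein_factor_degree_of_dvd_coeff_0:
  fixes g h :: "'a::idom poly"
  assumes p: "prime_elem p" and gh: "g * h = f"
    and dvd: "\<forall>k<degree f. p dvd coeff f k" and nsq: "\<not> p^2 dvd coeff f 0"
    and lc: "\<not> p dvd lead_coeff f" and pg: "p dvd coeff g 0"
  shows "degree g = 0 \<or> degree h = 0"
proof (rule ccontr)
  assume "\<not> ?thesis"
  then have dg: "degree g > 0" and dh: "degree h > 0"
    by auto
  have f0: "coeff f 0 = coeff g 0 * coeff h 0"
    using gh by (auto simp: coeff_mult)
  have ph: "\<not> p dvd coeff h 0"
    using pg nsq mult_dvd_mono[of p "coeff g 0" p "coeff h 0"] by (auto simp: f0 power2_eq_square)
  have "\<not> p dvd lead_coeff g"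
    using lc gh lead_coeff_mult[of g h] by auto
  then obtain r where r: "r \<le> degree g" "\<not> p dvd coeff g r" and below: "\<And>i. i < r \<Longrightarrow> p dvd coeff g i"
    using ex_least_nat_le[of "\<lambda>r. \<not> p dvd coeff g r" "degree g"] pg by metis
  have "r > 0" using r(2) pg by (cases r) auto
  have "degree f = degree g + degree h"
    using gh dg dh by (metis degree_mult_eq degree_0 less_numeral_extra(3))
  then have "p dvd coeff f r" using dvd r(1) dh by simp
  moreover have "coeff f r = (\<Sum>i<r. coeff g i * coeff h (r - i)) + coeff g r * coeff h 0"
    using gh by (auto simp: coeff_mult lessThan_Suc_atMost[symmetric])
  moreover have "p dvd (\<Sum>i<r. coeff g i * coeff h (r - i))"
    by (intro dvd_sum dvd_mult2 below) simp
  ultimately have "p dvd coeff g r * coeff h 0"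
    by (simp add: dvd_add_right_iff)
  then show False using p r(2) ph by (simp add: prime_elem_dvd_mult_iff)
qed

lemma eisenstein_factor_degree:
  fixes g h :: "'a::idom poly"
  assumes p: "prime_elem p" and gh: "g * h = f"
    and "\<forall>k<degree f. p dvd coeff f k" and "\<not> p^2 dvd coeff f 0" and "\<not> p dvd lead_coeff f"
  shows "degree g = 0 \<or> degree h = 0"
proof (rule ccontr)
  assume "\<not> ?thesis"
  then have dg: "degree g > 0" and dh: "degree h > 0" by auto
  then have "degree f > 0" using gh by (metis add_gr_0 degree_mult_eq degree_0 less_numeral_extra(3))
  then have "p dvd coeff g 0 * coeff h 0"
    using assms(3) gh by (auto simp: coeff_mult)
  then consider "p dvd coeff g 0" | "p dvd coeff h 0"
    using p by (auto simp: prime_elem_dvd_mult_iff)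
  then show False
    using eisenstein_factor_degree_of_dvd_coeff_0[OF p gh assms(3-5)]
      eisenstein_factor_degree_of_dvd_coeff_0[OF p _ assms(3-5), of h g] gh dg dh
    by (cases; simp add: mult.commute)
qed

definition geom_poly :: "nat \<Rightarrow> 'a::comm_semiring_1 poly" where
  "geom_poly n = (\<Sum>k<n. monom 1 k)"

lemma coeff_geom_poly: "coeff (geom_poly n) k = (if k < n then 1 else 0)"
  by (simp add: geom_poly_def coeff_sum)

lemma degree_geom_poly: "n > 0 \<Longrightarrow> degree (geom_poly n) = n - 1"
  by (intro antisym degree_le le_degree) (auto simp: coeff_geom_poly)

lemma poly_geom_poly: "poly (geom_poly n) x = (\<Sum>k<n. x ^ k)"
  by (simp add: geom_poly_def poly_sum poly_monom)

lemma map_poly_of_int_geom_poly: "map_poly of_int (geom_poly n) = geom_poly n"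
  by (rule poly_eqI) (simp add: coeff_map_poly coeff_geom_poly)

lemma coeff_geom_poly_shift:
  "coeff (geom_poly n \<circ>\<^sub>p [:1, 1:] :: int poly) k = (if k < n then int (n choose Suc k) else 0)"
proof -
  have "poly (pCons 0 (geom_poly n \<circ>\<^sub>p [:1, 1:])) x = poly ([:1, 1:] ^ n - 1) x" for x :: int
    using power_diff_1_eq[of "x + 1" n] by (simp add: poly_pcompose poly_geom_poly add.commute)
  then have "pCons 0 (geom_poly n \<circ>\<^sub>p [:1, 1:]) = [:1, 1:] ^ n - (1 :: int poly)"
    by (simp add: poly_eq_poly_eq_iff[symmetric] fun_eq_iff)
  then have "coeff (geom_poly n \<circ>\<^sub>p [:1, 1:]) k = coeff ([:1, 1:] ^ n - (1 :: int poly)) (Suc k)"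
    by (metis coeff_pCons_Suc)
  also have "\<dots> = (if k < n then int (n choose Suc k) else 0)"
    using degree_power_le[of "[:1, 1 :: int:]" n]
    by (auto simp: coeff_linear_poly_power intro!: coeff_eq_0)
  finally show ?thesis .
qed

lemma irreducible_geom_poly:
  assumes p: "prime p"
  shows "irreducible (geom_poly p :: int poly)"
proof (rule irreducibleI)
  have "p > 0" using p prime_gt_0_nat by blast
  then have deg: "degree (geom_poly p :: int poly) = p - 1"
    by (rule degree_geom_poly)
  then show "geom_poly p \<noteq> (0 :: int poly)" "\<not> is_unit (geom_poly p :: int poly)"
    using prime_ge_2_nat[OF p] by (auto simp: is_unit_poly_iff)
  fix g h :: "int poly"
  assume gh: "geom_poly p = g * h"
  let ?s = "\<lambda>q :: int poly. q \<circ>\<^sub>p [:1, 1:]"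
  (* Eisenstein at p after the substitution x \<mapsto> x + 1 *)
  have deg_s: "degree (?s (geom_poly p)) = p - 1"
    using deg by (simp add: degree_pcompose)
  have "degree (?s g) = 0 \<or> degree (?s h) = 0"
  proof (rule eisenstein_factor_degree[of "int p"])
    show "prime_elem (int p)" using p by simp
    show "?s g * ?s h = ?s (geom_poly p)" by (simp add: gh pcompose_mult)
    show "\<forall>k<degree (?s (geom_poly p)). int p dvd coeff (?s (geom_poly p)) k"
    proof (intro allI impI)
      fix k assume "k < degree (?s (geom_poly p))"
      then have "Suc k < p" using deg_s by simp
      then show "int p dvd coeff (?s (geom_poly p)) k"
        using dvd_choose_prime[of "Suc k" p] p by (simp add: coeff_geom_poly_shift)
    qed
    show "\<not> (int p)^2 dvd coeff (?s (geom_poly p)) 0"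
      using p prime_gt_1_nat[OF p] by (simp only: coeff_geom_poly_shift) (auto simp: power2_eq_square)
    show "\<not> int p dvd lead_coeff (?s (geom_poly p))"
      using p \<open>p > 0\<close> prime_gt_1_nat[OF p] by (simp add: deg_s coeff_geom_poly_shift)
  qed
  then have "degree g = 0 \<or> degree h = 0"
    by (simp add: degree_pcompose)
  moreover have "coeff g 0 * coeff h 0 = 1"
    using \<open>p > 0\<close> coeff_geom_poly[of p 0, where 'a = int] by (simp add: gh coeff_mult_0)
  ultimately show "is_unit g \<or> is_unit h"
    by (metis degree_eq_zeroE coeff_pCons_0 is_unit_poly_iff dvdI mult.commute)
qed

lemma prime_poly_degree_le_common_root:
  fixes P Q :: "int poly" and w :: "'a::{idom, ring_char_0}"
  assumes P: "prime_elem P" "poly (map_poly of_int P) w = 0"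
    and Q: "Q \<noteq> 0" "poly (map_poly of_int Q) w = 0"
  shows "degree P \<le> degree Q"
proof -
  define S where "S = {M :: int poly. M \<noteq> 0 \<and> poly (map_poly of_int M) w = 0}"
  obtain M where M: "M \<in> S" and M_min: "\<And>N. N \<in> S \<Longrightarrow> degree M \<le> degree N"
    using ex_has_least_nat[of "\<lambda>M. M \<in> S" Q degree] Q by (auto simp: S_def)
  have "M \<noteq> 0" and Mw: "poly (map_poly of_int M) w = 0"
    using M by (auto simp: S_def)
  obtain a q where a: "a \<noteq> 0" and div: "smult a P = M * q + pseudo_mod P M"
    using pseudo_mod(1)[OF \<open>M \<noteq> 0\<close>] by blast
  have "pseudo_mod P M = smult a P - M * q"
    using div by simp
  then have "poly (map_poly of_int (pseudo_mod P M)) w = 0"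
    using P(2) Mw by (simp add: map_poly_of_int_diff map_poly_of_int_mult map_poly_of_int_smult)
  then have "pseudo_mod P M = 0"
    using pseudo_mod(2)[OF \<open>M \<noteq> 0\<close>] M_min[of "pseudo_mod P M"] by (force simp: S_def)
  then have Mq: "M * q = smult a P"
    using div by simp
  then have "P dvd M * q"
    by (metis dvd_smult dvd_refl)
  then consider "P dvd M" | "P dvd q"
    using P(1) prime_elem_dvd_mult_iff by blast
  then have "degree P \<le> degree M"
  proof cases
    case 2
    then obtain q' where "q = P * q'" ..
    then have "P * (M * q') = P * [:a:]"
      using Mq by (simp add: algebra_simps)
    then have "M * q' = [:a:]"
      using P(1) mult_left_cancel[of P] unfolding prime_elem_def by blast
    then have "degree M = 0"
      using a \<open>M \<noteq> 0\<close> by (metis add_is_0 degree_mult_eq degree_pCons_0 mult_zero_right pCons_eq_0_iff)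
    then show ?thesis
      using Mw \<open>M \<noteq> 0\<close> by (auto elim!: degree_eq_zeroE simp: map_poly_pCons)
  qed (use \<open>M \<noteq> 0\<close> dvd_imp_degree_le in blast)
  also have "\<dots> \<le> degree Q"
    using M_min Q by (simp add: S_def)
  finally show ?thesis .
qed

section \<open>Sums of p-th roots of unity\<close>

lemma sum_mset_eq_sum_count:
  fixes f :: "'a \<Rightarrow> 'b::comm_semiring_1"
  assumes "set_mset R \<subseteq> S" "finite S"
  shows "(\<Sum>x\<in>#R. f x) = (\<Sum>y\<in>S. of_nat (count R y) * f y)"
  using assms(1)
proof (induction R)
  case (add x R)
  then have "(\<Sum>y\<in>S. of_nat (count (add_mset x R) y) * f y)
      = (\<Sum>y\<in>S. of_nat (count R y) * f y + (if y = x then f y else 0))"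
    by (intro sum.cong) (auto simp: algebra_simps)
  also have "\<dots> = (\<Sum>y\<in>S. of_nat (count R y) * f y) + f x"
    using add.prems assms(2) by (simp add: sum.distrib)
  finally show ?case
    using add by (simp add: add.commute)
qed simp

lemma sum_lessThan_shift_periodic:
  fixes \<phi> :: "nat \<Rightarrow> 'a::cancel_comm_monoid_add"
  assumes "\<And>t. \<phi> (t + n) = \<phi> t"
  shows "(\<Sum>t<n. \<phi> (t + m)) = (\<Sum>t<n. \<phi> t)"
proof (induction m)
  case (Suc m)
  have "\<phi> m + (\<Sum>t<n. \<phi> (Suc t + m)) = (\<Sum>t<Suc n. \<phi> (t + m))"
    by (simp only: sum.lessThan_Suc_shift) simp
  also have "\<dots> = \<phi> m + (\<Sum>t<n. \<phi> (t + m))"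
    using assms[of m] by (simp add: add.commute)
  finally show ?case
    using Suc by simp
qed simp

locale prime_modulus =
  fixes p :: nat
  assumes prime_p: "prime p"
begin

lemma p_gt_1: "p > 1"
  using prime_p by (rule prime_gt_1_nat)

definition \<zeta> :: "int \<Rightarrow> complex" where
  "\<zeta> x = cis (2 * pi * of_int x / of_nat p)"

lemma zeta_add: "\<zeta> (x + y) = \<zeta> x * \<zeta> y"
  by (simp add: \<zeta>_def cis_mult add_divide_distrib distrib_left)

lemma zeta_mult_nat: "\<zeta> (int k * x) = \<zeta> x ^ k"
proof (induction k)
  case (Suc k)
  have "\<zeta> (int (Suc k) * x) = \<zeta> (int k * x) * \<zeta> x"
    by (simp add: algebra_simps flip: zeta_add)
  with Suc show ?case by simp
qed (simp add: \<zeta>_def)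

lemma zeta_of_nat: "\<zeta> (int k) = \<zeta> 1 ^ k"
  using zeta_mult_nat[of k 1] by simp

lemma zeta_uminus: "\<zeta> (- x) = cnj (\<zeta> x)"
  by (simp add: \<zeta>_def cis_cnj)

lemma zeta_eq_1_iff: "\<zeta> x = 1 \<longleftrightarrow> int p dvd x"
proof -
  have "2 * pi * of_int x / of_nat p = of_int n * (2 * pi) \<longleftrightarrow> x = n * int p" for n
  proof -
    have "2 * pi * of_int x / of_nat p = of_int n * (2 * pi) \<longleftrightarrow> of_int x = of_int n * real p"
      using p_gt_1 by (auto simp: divide_eq_eq mult_ac)
    also have "\<dots> \<longleftrightarrow> x = n * int p"
      by (metis of_int_eq_iff of_int_mult of_int_of_nat_eq)
    finally show ?thesis .
  qed
  then show ?thesis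
    by (auto simp: \<zeta>_def cis_eq_1_iff dvd_def mult.commute)
qed

lemma zeta_eq_iff: "\<zeta> x = \<zeta> y \<longleftrightarrow> int p dvd x - y"
proof -
  have "\<zeta> x = \<zeta> (x - y) * \<zeta> y"
    by (simp flip: zeta_add)
  moreover have "\<zeta> y \<noteq> 0"
    by (simp add: \<zeta>_def)
  ultimately show ?thesis
    by (metis mult_cancel_right1 zeta_eq_1_iff)
qed

lemma zeta_mod: "\<zeta> (x mod int p) = \<zeta> x"
  by (simp add: zeta_eq_iff mod_eq_dvd_iff[symmetric])

lemma sum_zeta_multiples: "(\<Sum>k<p. \<zeta> (int k * m)) = (if int p dvd m then of_nat p else 0)"
proof -
  have "(\<zeta> m - 1) * (\<Sum>k<p. \<zeta> m ^ k) = \<zeta> (int p * m) - 1"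
    by (simp add: power_diff_1_eq zeta_mult_nat)
  also have "\<zeta> (int p * m) = 1"
    by (simp add: zeta_eq_1_iff)
  finally show ?thesis
    by (auto simp: zeta_mult_nat zeta_eq_1_iff[symmetric])
qed

lemma zeta_root_geom_poly: "poly (map_poly of_int (geom_poly p)) (\<zeta> 1) = 0"
  using sum_zeta_multiples[of 1] p_gt_1
  by (simp add: map_poly_of_int_geom_poly poly_geom_poly zeta_of_nat)

lemma int_combination_zeta_eq_0_const:
  assumes sum0: "(\<Sum>k<p. of_int (n k) * \<zeta> (int k)) = 0" and "k < p"
  shows "n k = n (p - 1)"
proof -
  define Q :: "int poly" where "Q = (\<Sum>k<p - 1. monom (n k - n (p - 1)) k)"
  have coeff_Q: "coeff Q k = (if k < p - 1 then n k - n (p - 1) else 0)" for k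
    by (simp add: Q_def coeff_sum)
  have "map_poly of_int Q = (\<Sum>k<p - 1. monom (of_int (n k - n (p - 1)) :: complex) k)"
    by (rule poly_eqI) (simp add: coeff_map_poly coeff_Q coeff_sum)
  then have "poly (map_poly of_int Q) (\<zeta> 1) = (\<Sum>k<p - 1. of_int (n k - n (p - 1)) * \<zeta> (int k))"
    by (simp add: poly_sum poly_monom zeta_of_nat)
  also have "\<dots> = (\<Sum>k<p. of_int (n k - n (p - 1)) * \<zeta> (int k))"
    using p_gt_1 by (cases p) simp_all
  also have "\<dots> = (\<Sum>k<p. of_int (n k) * \<zeta> (int k)) - of_int (n (p - 1)) * (\<Sum>k<p. \<zeta> (int k * 1))"
    by (simp add: left_diff_distrib sum_subtractf sum_distrib_left)
  also have "\<dots> = 0"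
    using sum0 sum_zeta_multiples[of 1] p_gt_1 by simp
  finally have Q_root: "poly (map_poly of_int Q) (\<zeta> 1) = 0" .
  have "prime_elem (geom_poly p :: int poly)"
    using irreducible_geom_poly[OF prime_p] by (rule irreducible_imp_prime_poly)
  have "Q = 0"
  proof (rule ccontr)
    assume "Q \<noteq> 0"
    then have "degree (geom_poly p :: int poly) \<le> degree Q"
      using prime_poly_degree_le_common_root[OF \<open>prime_elem _\<close> zeta_root_geom_poly _ Q_root] by blast
    moreover have "degree Q < p - 1"
      using p_gt_1 by (intro degree_lessI) (auto simp: coeff_Q)
    ultimately show False
      using degree_geom_poly[of p, where 'a = int] p_gt_1 by simp
  qed
  show ?thesis
  proof (cases "k < p - 1")
    case True
    then show ?thesis using coeff_Q[of k] \<open>Q = 0\<close> by simp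
  next
    case False
    then have "k = p - 1" using \<open>k < p\<close> by linarith
    then show ?thesis by simp
  qed
qed

definition residue_mset :: "int multiset \<Rightarrow> int multiset" where
  "residue_mset M = image_mset (\<lambda>x. x mod int p) M"

lemma set_residue_mset: "set_mset (residue_mset M) \<subseteq> int ` {..<p}"
proof
  fix y assume "y \<in># residue_mset M"
  then obtain x where "y = x mod int p"
    by (auto simp: residue_mset_def)
  then show "y \<in> int ` {..<p}"
    using p_gt_1 by (intro image_eqI[of _ _ "nat y"]) (auto simp: nat_less_iff)
qed

lemma sum_mset_eq_sum_residue_count:
  fixes f :: "int \<Rightarrow> 'a::comm_semiring_1"
  assumes "\<And>x. f (x mod int p) = f x"
  shows "(\<Sum>x\<in>#M. f x) = (\<Sum>k<p. of_nat (count (residue_mset M) (int k)) * f (int k))"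
proof -
  have "(\<Sum>x\<in>#M. f x) = (\<Sum>x\<in>#residue_mset M. f x)"
    by (simp add: residue_mset_def multiset.map_comp o_def assms)
  also have "\<dots> = (\<Sum>y\<in>int ` {..<p}. of_nat (count (residue_mset M) y) * f y)"
    using set_residue_mset by (rule sum_mset_eq_sum_count) simp
  finally show ?thesis
    by (simp add: sum.reindex)
qed

lemma residue_mset_eq_of_sum_zeta_eq:
  assumes size: "size A = size B" and sum_eq: "(\<Sum>x\<in>#A. \<zeta> x) = (\<Sum>x\<in>#B. \<zeta> x)"
  shows "residue_mset A = residue_mset B"
proof -
  define n where "n k = int (count (residue_mset A) (int k)) - int (count (residue_mset B) (int k))" for k
  have "(\<Sum>k<p. of_int (n k) * \<zeta> (int k))
      = (\<Sum>k<p. of_nat (count (residue_mset A) (int k)) * \<zeta> (int k))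
        - (\<Sum>k<p. of_nat (count (residue_mset B) (int k)) * \<zeta> (int k))"
    by (simp add: n_def left_diff_distrib sum_subtractf)
  also have "\<dots> = 0"
    using sum_eq by (simp only: sum_mset_eq_sum_residue_count[of \<zeta>, OF zeta_mod, symmetric]) simp
  finally have n_const: "n k = n (p - 1)" if "k < p" for k
    by (rule int_combination_zeta_eq_0_const[OF _ that])
  have "(\<Sum>k<p. n k) = (\<Sum>k<p. n (p - 1))"
    by (metis lessThan_iff n_const sum.cong)
  then have "int p * n (p - 1) = (\<Sum>k<p. n k)"
    by simp
  also have "\<dots> = (\<Sum>x\<in>#A. 1) - (\<Sum>x\<in>#B. 1)"
    by (simp only: sum_mset_eq_sum_residue_count[of "\<lambda>_. 1 :: int"] n_def sum_subtractf mult_1_right)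
  finally have "n (p - 1) = 0"
    using size p_gt_1 by simp
  then have counts_eq: "count (residue_mset A) (int k) = count (residue_mset B) (int k)" if "k < p" for k
    using n_const[OF that] by (simp add: n_def)
  show ?thesis
  proof (rule multiset_eqI)
    fix y
    show "count (residue_mset A) y = count (residue_mset B) y"
    proof (cases "y \<in> int ` {..<p}")
      case True
      then show ?thesis using counts_eq by auto
    next
      case False
      then have "y \<notin># residue_mset A" "y \<notin># residue_mset B"
        using set_residue_mset by blast+
      then show ?thesis by (metis count_eq_zero_iff)
    qed
  qed
qed

lemma residue_mset_eq_partner:
  assumes "residue_mset X = residue_mset Y" "x \<in># X"
  shows "\<exists>y\<in>#Y. int p dvd x - y"
proof -
  have "x mod int p \<in># residue_mset Y"
    using assms by (metis image_eqI residue_mset_def set_image_mset)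
  then show ?thesis
    by (auto simp: residue_mset_def simp flip: mod_eq_dvd_iff)
qed

definition dft :: "(nat \<Rightarrow> real) \<Rightarrow> nat \<Rightarrow> complex" where
  "dft y r = (\<Sum>q<p. of_real (y q) * \<zeta> (- (int r * int q)))"

lemma dft_add: "dft (\<lambda>t. f t + g t) r = dft f r + dft g r"
  by (simp add: dft_def sum.distrib distrib_right)

lemma dft_diff: "dft (\<lambda>t. f t - g t) r = dft f r - dft g r"
  by (simp add: dft_def sum_subtractf left_diff_distrib)

lemma dft_scale: "dft (\<lambda>t. a * f t) r = of_real a * dft f r"
  by (simp add: dft_def sum_distrib_left mult.assoc)

lemma dft_inversion:
  assumes "q < p"
  shows "of_real (y q) * of_nat p = (\<Sum>r<p. dft y r * \<zeta> (int r * int q))"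
proof -
  have "\<zeta> (- (int r * int q')) * \<zeta> (int r * int q) = \<zeta> (int r * (int q - int q'))" for r q'
    by (simp add: algebra_simps flip: zeta_add)
  then have "(\<Sum>r<p. dft y r * \<zeta> (int r * int q))
      = (\<Sum>r<p. \<Sum>q'<p. of_real (y q') * \<zeta> (int r * (int q - int q')))"
    by (simp add: dft_def sum_distrib_right mult.assoc)
  also have "\<dots> = (\<Sum>q'<p. of_real (y q') * (\<Sum>r<p. \<zeta> (int r * (int q - int q'))))"
    by (subst sum.swap) (simp add: sum_distrib_left)
  also have "\<dots> = (\<Sum>q'<p. if q' = q then of_real (y q') * of_nat p else 0)"
  proof (rule sum.cong)
    fix q' assume "q' \<in> {..<p}"
    then have "int p dvd int q - int q' \<longleftrightarrow> q' = q"
      using assms by (auto simp flip: mod_eq_dvd_iff)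
    then show "of_real (y q') * (\<Sum>r<p. \<zeta> (int r * (int q - int q')))
        = (if q' = q then of_real (y q') * of_nat p else 0)"
      by (simp add: sum_zeta_multiples)
  qed simp
  also have "\<dots> = of_real (y q) * of_nat p"
    using assms by simp
  finally show ?thesis ..
qed

lemma dft_shift:
  assumes "\<And>q. y (q + p) = y q"
  shows "dft (\<lambda>t. y (t + m)) r = \<zeta> (int r * int m) * dft y r"
proof -
  define \<phi> where "\<phi> t = of_real (y t) * \<zeta> (- (int r * int t))" for t
  have "\<phi> (t + p) = \<phi> t" for t
    using assms[of t] by (simp add: \<phi>_def zeta_eq_iff algebra_simps)
  then have "(\<Sum>t<p. \<phi> (t + m)) = dft y r"
    unfolding dft_def \<phi>_def[symmetric] by (rule sum_lessThan_shift_periodic)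
  have "of_real (y (t + m)) * \<zeta> (- (int r * int t)) = \<zeta> (int r * int m) * \<phi> (t + m)" for t
    by (simp add: \<phi>_def algebra_simps flip: zeta_add)
  then have "dft (\<lambda>t. y (t + m)) r = \<zeta> (int r * int m) * (\<Sum>t<p. \<phi> (t + m))"
    by (simp add: dft_def sum_distrib_left)
  with \<open>(\<Sum>t<p. \<phi> (t + m)) = dft y r\<close> show ?thesis
    by simp
qed

lemma dft_reflect:
  assumes "r \<le> p"
  shows "dft y (p - r) = cnj (dft y r)"
proof -
  have "\<zeta> (- (int (p - r) * int q)) = cnj (\<zeta> (- (int r * int q)))" for q
  proof -
    have "- (int (p - r) * int q) - int r * int q = int p * (- int q)"
      using assms by (simp add: algebra_simps)
    then have "\<zeta> (- (int (p - r) * int q)) = \<zeta> (int r * int q)"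
      by (simp add: zeta_eq_iff)
    then show ?thesis
      by (simp add: zeta_uminus)
  qed
  then show ?thesis
    by (simp add: dft_def)
qed

lemma dft_supported_trigonometric:
  assumes r0: "0 < r0" "r0 < p" "2 * r0 \<noteq> p"
    and vanish: "\<And>r. r < p \<Longrightarrow> r \<notin> {0, r0, p - r0} \<Longrightarrow> dft y r = 0"
  obtains \<alpha> \<beta> \<gamma> where "\<And>q. q < p \<Longrightarrow>
    y q = \<alpha> + \<beta> * cos (2 * pi * real (r0 * q) / real p) + \<gamma> * sin (2 * pi * real (r0 * q) / real p)"
proof
  fix q assume "q < p"
  let ?w = "dft y r0 * \<zeta> (int r0 * int q)"
  have "of_real (y q) * of_nat p = (\<Sum>r\<in>{0, r0, p - r0}. dft y r * \<zeta> (int r * int q))"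
    unfolding dft_inversion[OF \<open>q < p\<close>] using r0 vanish
    by (intro sum.mono_neutral_right) auto
  also have "\<dots> = dft y 0 + ?w + dft y (p - r0) * \<zeta> (int (p - r0) * int q)"
    using r0 by (simp add: \<zeta>_def)
  also have "dft y (p - r0) * \<zeta> (int (p - r0) * int q) = cnj ?w"
  proof -
    have "int (p - r0) * int q = - (int r0 * int q) + int p * int q"
      using r0 by (simp add: algebra_simps)
    then have "\<zeta> (int (p - r0) * int q) = \<zeta> (- (int r0 * int q))"
      by (simp add: zeta_eq_iff)
    then have "\<zeta> (int (p - r0) * int q) = cnj (\<zeta> (int r0 * int q))"
      by (simp add: zeta_uminus)
    then show ?thesis
      using r0 by (simp add: dft_reflect)
  qed
  finally have "of_real (y q) * of_nat p = dft y 0 + (?w + cnj ?w)"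
    by (simp add: add.assoc)
  then have "y q * real p = Re (dft y 0) + 2 * Re ?w"
    by (metis Re_complex_of_real complex_add_cnj of_real_mult of_real_of_nat_eq plus_complex.sel(1))
  also have "Re ?w = Re (dft y r0) * cos (2 * pi * real (r0 * q) / real p)
      - Im (dft y r0) * sin (2 * pi * real (r0 * q) / real p)"
    by (simp add: \<zeta>_def)
  finally have "y q * real p = Re (dft y 0) + 2 * Re (dft y r0) * cos (2 * pi * real (r0 * q) / real p)
      - 2 * Im (dft y r0) * sin (2 * pi * real (r0 * q) / real p)"
    by simp
  then have "y q = (Re (dft y 0) + 2 * Re (dft y r0) * cos (2 * pi * real (r0 * q) / real p)
      - 2 * Im (dft y r0) * sin (2 * pi * real (r0 * q) / real p)) / real p"
    using r0 by (simp add: eq_divide_eq)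
  then show "y q = Re (dft y 0) / real p + (2 * Re (dft y r0) / real p) * cos (2 * pi * real (r0 * q) / real p)
      + (- 2 * Im (dft y r0) / real p) * sin (2 * pi * real (r0 * q) / real p)"
    by (simp add: add_divide_distrib diff_divide_distrib)
qed

definition cross_terms_pos :: "int \<Rightarrow> int \<Rightarrow> int \<Rightarrow> int \<Rightarrow> int \<Rightarrow> int \<Rightarrow> int multiset" where
  "cross_terms_pos r s I J K L = {#r * I + s * K, r * J + s * L, s * I + r * L, s * J + r * K#}"

definition cross_terms_neg :: "int \<Rightarrow> int \<Rightarrow> int \<Rightarrow> int \<Rightarrow> int \<Rightarrow> int \<Rightarrow> int multiset" where
  "cross_terms_neg r s I J K L = {#r * I + s * L, r * J + s * K, s * I + r * K, s * J + r * L#}"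

lemma zeta_cross_product:
  "(\<zeta> (r * I) - \<zeta> (r * J)) * (\<zeta> (s * K) - \<zeta> (s * L)) - (\<zeta> (s * I) - \<zeta> (s * J)) * (\<zeta> (r * K) - \<zeta> (r * L))
    = (\<Sum>x\<in>#cross_terms_pos r s I J K L. \<zeta> x) - (\<Sum>x\<in>#cross_terms_neg r s I J K L. \<zeta> x)"
  by (simp add: cross_terms_pos_def cross_terms_neg_def algebra_simps flip: zeta_add)

lemma int_dvd_mult_iff: "int p dvd a * b \<longleftrightarrow> int p dvd a \<or> int p dvd b"
  using prime_p by (simp add: prime_dvd_mult_iff)

lemma cross_term_congruence:
  fixes r s I J K L y :: int
  assumes "\<not> int p dvd r" "\<not> int p dvd s" "\<not> int p dvd r - s"
    and "\<not> int p dvd I - J" "\<not> int p dvd K - L" "\<not> int p dvd I - K"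
    and y: "y \<in># cross_terms_neg r s I J K L"
    and "int p dvd (r * I + s * K) - y"
  shows "y = s * J + r * L"
proof -
  have "(r * I + s * K) - (r * I + s * L) = s * (K - L)"
    and "(r * I + s * K) - (r * J + s * K) = r * (I - J)"
    and "(r * I + s * K) - (s * I + r * K) = (r - s) * (I - K)"
    by (simp_all add: algebra_simps)
  with y assms(1-6,8) show ?thesis
    by (auto simp: cross_terms_neg_def int_dvd_mult_iff)
qed

lemma cross_residues_opposite:
  fixes r s I J K L :: int
  assumes units: "\<not> int p dvd r" "\<not> int p dvd s"
    and indices: "\<not> int p dvd I - J" "\<not> int p dvd K - L" "\<not> int p dvd I - K"
      "\<not> int p dvd J - L" "\<not> int p dvd I - L"
    and residues: "residue_mset (cross_terms_pos r s I J K L) = residue_mset (cross_terms_neg r s I J K L)"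
  shows "int p dvd r - s \<or> int p dvd r + s"
proof (rule ccontr)
  assume "\<not> ?thesis"
  then have opp: "\<not> int p dvd r - s" "\<not> int p dvd r + s"
    by auto
  have match1: "int p dvd (r * I + s * K) - (s * J + r * L)"
  proof -
    obtain y where "y \<in># cross_terms_neg r s I J K L" "int p dvd (r * I + s * K) - y"
      using residue_mset_eq_partner[OF residues, of "r * I + s * K"] by (auto simp: cross_terms_pos_def)
    then show ?thesis
      using cross_term_congruence[of r s I J K L y] units opp indices by simp
  qed
  have match2: "int p dvd (r * J + s * L) - (s * I + r * K)"
  proof -
    have "cross_terms_neg r s J I L K = cross_terms_neg r s I J K L"
      by (simp add: cross_terms_neg_def add_mset_commute)
    moreover obtain y where "y \<in># cross_terms_neg r s I J K L" "int p dvd (r * J + s * L) - y"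
      using residue_mset_eq_partner[OF residues, of "r * J + s * L"] by (auto simp: cross_terms_pos_def)
    moreover have "\<not> int p dvd J - I" "\<not> int p dvd L - K"
      using indices by (simp_all add: dvd_diff_commute)
    ultimately show ?thesis
      using cross_term_congruence[of r s J I L K y] units opp indices by simp
  qed
  have "(r - s) * (I + J - K - L) = ((r * I + s * K) - (s * J + r * L)) + ((r * J + s * L) - (s * I + r * K))"
    by (simp add: algebra_simps)
  then have sum_indices: "int p dvd I + J - K - L"
    using match1 match2 opp by (metis dvd_add int_dvd_mult_iff)
  have "(r + s) * (I - L) = ((r * I + s * K) - (s * J + r * L)) + s * (I + J - K - L)"
    by (simp add: algebra_simps)
  then have "int p dvd (r + s) * (I - L)"
    using match1 sum_indices by simp
  then show False
    using opp indices by (simp add: int_dvd_mult_iff)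
qed

end

section \<open>Periodic solutions of a four-term circulant relation\<close>

locale circulant_relation = prime_modulus +
  fixes c d :: real and I J K L :: nat
  assumes c_nonzero: "c \<noteq> 0"
    and indices_distinct: "distinct [I, J, K, L]"
    and indices_less: "I < p" "J < p" "K < p" "L < p"
begin

text \<open>The eigenvalue at the character q \<mapsto> \<zeta> (r q) of the circulant operator
  y \<mapsto> c (y(\<cdot> + I) - y(\<cdot> + J)) + d (y(\<cdot> + K) - y(\<cdot> + L)).\<close>
definition symbol :: "nat \<Rightarrow> complex" where
  "symbol r = of_real c * (\<zeta> (int r * int I) - \<zeta> (int r * int J))
    + of_real d * (\<zeta> (int r * int K) - \<zeta> (int r * int L))"

lemma symbol_zeros_cross_residues:
  assumes "symbol r = 0" "symbol s = 0"
  shows "residue_mset (cross_terms_pos (int r) (int s) (int I) (int J) (int K) (int L))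
    = residue_mset (cross_terms_neg (int r) (int s) (int I) (int J) (int K) (int L))"
proof -
  let ?A = "\<lambda>r. \<zeta> (int r * int I) - \<zeta> (int r * int J)" and ?B = "\<lambda>r. \<zeta> (int r * int K) - \<zeta> (int r * int L)"
  have "of_real c * (?A r * ?B s - ?A s * ?B r) = symbol r * ?B s - symbol s * ?B r"
    by (simp add: symbol_def algebra_simps)
  then have "?A r * ?B s - ?A s * ?B r = 0"
    using assms c_nonzero by simp
  then have "(\<Sum>x\<in>#cross_terms_pos (int r) (int s) (int I) (int J) (int K) (int L). \<zeta> x)
      = (\<Sum>x\<in>#cross_terms_neg (int r) (int s) (int I) (int J) (int K) (int L). \<zeta> x)"
    by (simp add: zeta_cross_product)
  then show ?thesis
    by (rule residue_mset_eq_of_sum_zeta_eq[rotated]) (simp add: cross_terms_pos_def cross_terms_neg_def)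
qed

lemma symbol_zeros_opposite:
  assumes r: "0 < r" "r < p" and s: "0 < s" "s < p"
    and "symbol r = 0" "symbol s = 0"
  shows "s = r \<or> s = p - r"
proof -
  have ndvd: "\<not> int p dvd int A - int B" if "A < p" "B < p" "A \<noteq> B" for A B
    using that by (auto simp flip: mod_eq_dvd_iff)
  have "int p dvd int r - int s \<or> int p dvd int r + int s"
  proof (rule cross_residues_opposite)
    show "\<not> int p dvd int r" "\<not> int p dvd int s"
      using r s ndvd[of r 0] ndvd[of s 0] by auto
    show "\<not> int p dvd int I - int J" "\<not> int p dvd int K - int L" "\<not> int p dvd int I - int K"
      "\<not> int p dvd int J - int L" "\<not> int p dvd int I - int L"
      using indices_distinct indices_less by (simp_all add: ndvd)
  qed (rule symbol_zeros_cross_residues[OF assms(5,6)])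
  then show ?thesis
  proof
    assume "int p dvd int r - int s"
    then show ?thesis
      using ndvd[of r s] r s by auto
  next
    assume "int p dvd int r + int s"
    then obtain k where k: "int r + int s = int p * k" ..
    have "0 < int p * k" "int p * k < int p * 2"
      using r s k by linarith+
    then have "k = 1"
      by (simp add: zero_less_mult_iff mult_less_cancel_left)
    then have "r + s = p"
      using k by simp
    then show ?thesis
      by auto
  qed
qed

lemma symbol_zeros:
  obtains r0 where "0 < r0" "r0 < p" "\<And>r. 0 < r \<Longrightarrow> r < p \<Longrightarrow> symbol r = 0 \<Longrightarrow> r = r0 \<or> r = p - r0"
proof (cases "\<exists>r0. 0 < r0 \<and> r0 < p \<and> symbol r0 = 0")
  case True
  then obtain r0 where r0: "0 < r0" "r0 < p" "symbol r0 = 0" by blast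
  show ?thesis
  proof (rule that[OF r0(1,2)])
    fix r assume "0 < r" "r < p" "symbol r = 0"
    with r0 show "r = r0 \<or> r = p - r0"
      by (intro symbol_zeros_opposite)
  qed
next
  case False
  show ?thesis
    by (rule that[of 1]) (use False p_gt_1 in auto)
qed

lemma symbol_mult_dft:
  assumes periodic: "\<And>q. y (q + p) = y q"
    and rel: "\<And>t. c * (y (t + I) - y (t + J)) + d * (y (t + K) - y (t + L)) = 0"
  shows "symbol r * dft y r = 0"
proof -
  have "symbol r * dft y r = of_real c * (dft (\<lambda>t. y (t + I)) r - dft (\<lambda>t. y (t + J)) r)
      + of_real d * (dft (\<lambda>t. y (t + K)) r - dft (\<lambda>t. y (t + L)) r)"
    by (simp add: dft_shift[of y, OF periodic] symbol_def algebra_simps)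
  also have "\<dots> = dft (\<lambda>t. c * (y (t + I) - y (t + J)) + d * (y (t + K) - y (t + L))) r"
    by (simp only: dft_add dft_diff dft_scale)
  also have "\<dots> = 0"
    by (simp add: rel dft_def)
  finally show ?thesis .
qed

lemma odd_p: "odd p"
proof -
  have "card (set [I, J, K, L]) \<le> card {..<p}"
    by (rule card_mono) (use indices_less in auto)
  then have "4 \<le> p"
    using distinct_card[OF indices_distinct] by simp
  then show ?thesis
    using prime_odd_nat[OF prime_p] by simp
qed

lemma periodic_solutions_trigonometric:
  obtains r0 where "\<And>y. (\<And>q. y (q + p) = y q) \<Longrightarrow>
      (\<And>t. c * (y (t + I) - y (t + J)) + d * (y (t + K) - y (t + L)) = 0) \<Longrightarrow>
      \<exists>\<alpha> \<beta> \<gamma>. \<forall>q<p. y q = \<alpha> + \<beta> * cos (2 * pi * real (r0 * q) / real p)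
        + \<gamma> * sin (2 * pi * real (r0 * q) / real p)"
proof -
  obtain r0 where r0: "0 < r0" "r0 < p"
    and zeros: "\<And>r. 0 < r \<Longrightarrow> r < p \<Longrightarrow> symbol r = 0 \<Longrightarrow> r = r0 \<or> r = p - r0"
    using symbol_zeros by blast
  have "2 * r0 \<noteq> p"
    using odd_p by auto
  show ?thesis
  proof (rule that)
    fix y
    assume periodic: "\<And>q. y (q + p) = y q"
      and rel: "\<And>t. c * (y (t + I) - y (t + J)) + d * (y (t + K) - y (t + L)) = 0"
    have "dft y r = 0" if "r < p" "r \<notin> {0, r0, p - r0}" for r
      using symbol_mult_dft[of y r, OF periodic rel] zeros[of r] that by auto
    then obtain \<alpha> \<beta> \<gamma> where "\<And>q. q < p \<Longrightarrow> y q = \<alpha> + \<beta> * cos (2 * pi * real (r0 * q) / real p)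
        + \<gamma> * sin (2 * pi * real (r0 * q) / real p)"
      using dft_supported_trigonometric[OF r0 \<open>2 * r0 \<noteq> p\<close>] by blast
    then show "\<exists>\<alpha> \<beta> \<gamma>. \<forall>q<p. y q = \<alpha> + \<beta> * cos (2 * pi * real (r0 * q) / real p)
        + \<gamma> * sin (2 * pi * real (r0 * q) / real p)"
      by blast
  qed
qed

end

section \<open>Orbits of a permutation group containing a p-cycle\<close>

lemma full_cycle_enumeration:
  fixes \<pi> :: "'n::finite \<Rightarrow> 'n"
  assumes "full_cycle \<pi>"
  obtains pos :: "'n \<Rightarrow> nat" and e :: "nat \<Rightarrow> 'n"
  where "\<And>m. pos m < CARD('n)" "\<And>m. e (pos m) = m"
    "\<And>q. e (q + CARD('n)) = e q" "\<And>q. \<pi> (e q) = e (Suc q)"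
proof -
  obtain cs where cs: "distinct cs" "length cs = CARD('n)" "\<pi> = cycle_of_list cs"
    using assms by (auto simp: full_cycle_def)
  define e where "e q = cs ! (q mod CARD('n))" for q
  define pos where "pos = inv_into {..<CARD('n)} e"
  have "e ` {..<CARD('n)} = set cs"
    using cs(2) by (auto simp: e_def set_conv_nth)
  also have "set cs = UNIV"
    using cs by (intro card_subset_eq) (simp_all add: distinct_card)
  finally have range: "m \<in> e ` {..<CARD('n)}" for m
    by simp
  show ?thesis
  proof (rule that)
    show "pos m < CARD('n)" for m
      using inv_into_into[OF range] by (simp add: pos_def)
    show "e (pos m) = m" for m
      using f_inv_into_f[OF range] by (simp add: pos_def)
    show "e (q + CARD('n)) = e q" for q
      by (simp add: e_def)
    show "\<pi> (e q) = e (Suc q)" for q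
    proof -
      have k: "q mod CARD('n) < length cs"
        using cs(2) by simp
      have "\<pi> (e q) = map \<pi> cs ! (q mod CARD('n))"
        using k by (simp add: e_def)
      also have "map \<pi> cs = rotate1 cs"
        using cyclic_rotation[of cs 1] cs by simp
      also have "rotate1 cs ! (q mod CARD('n)) = e (Suc q)"
        using nth_rotate1[OF k] cs(2) by (simp add: e_def mod_Suc_eq)
      finally show ?thesis .
    qed
  qed
qed

lemma shift_invariant_iterate:
  assumes shift: "\<And>x. x \<in> X \<Longrightarrow> (\<chi> m. x $ \<pi> m) \<in> X"
    and step: "\<And>q. \<pi> (e q) = e (Suc q)" and "x \<in> X"
  shows "\<exists>x'\<in>X. \<forall>q. x' $ e q = x $ e (q + t)"
proof (induction t)
  case (Suc t)
  then obtain x' where "x' \<in> X" "\<forall>q. x' $ e q = x $ e (q + t)" ..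
  then show ?case
    using shift[of x'] by (intro bexI[of _ "\<chi> m. x' $ \<pi> m"]) (simp_all add: step)
qed (use \<open>x \<in> X\<close> in auto)

lemma dim_span_shift_invariant_relation:
  fixes X :: "(real^'n) set" and \<pi> :: "'n \<Rightarrow> 'n" and c d :: real
  assumes "prime CARD('n)" "full_cycle \<pi>" "distinct [i, j, k, l]" "c \<noteq> 0"
    and shift: "\<And>x. x \<in> X \<Longrightarrow> (\<chi> m. x $ \<pi> m) \<in> X"
    and rel: "\<And>x. x \<in> X \<Longrightarrow> c * (x $ i - x $ j) + d * (x $ k - x $ l) = 0"
  shows "dim (span X) \<le> 3"
proof -
  define p where "p = CARD('n)"
  obtain pos :: "'n \<Rightarrow> nat" and e :: "nat \<Rightarrow> 'n" where pos: "\<And>m. pos m < p" "\<And>m. e (pos m) = m"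
    and e_periodic: "\<And>q. e (q + p) = e q" and e_step: "\<And>q. \<pi> (e q) = e (Suc q)"
    using full_cycle_enumeration[OF assms(2), folded p_def] by metis
  have pos_inj: "pos m = pos m' \<Longrightarrow> m = m'" for m m'
    using pos(2) by metis
  interpret circulant_relation p c d "pos i" "pos j" "pos k" "pos l"
    using assms(1,3,4) pos(1) by unfold_locales (auto simp: p_def dest: pos_inj)
  obtain r0 where trig: "\<And>y. (\<And>q. y (q + p) = y q) \<Longrightarrow>
      (\<And>t. c * (y (t + pos i) - y (t + pos j)) + d * (y (t + pos k) - y (t + pos l)) = 0) \<Longrightarrow>
      \<exists>\<alpha> \<beta> \<gamma>. \<forall>q<p. y q = \<alpha> + \<beta> * cos (2 * pi * real (r0 * q) / real p)
        + \<gamma> * sin (2 * pi * real (r0 * q) / real p)"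
    using periodic_solutions_trigonometric by blast
  define b1 :: "real^'n" where "b1 = (\<chi> m. 1)"
  define b2 :: "real^'n" where "b2 = (\<chi> m. cos (2 * pi * real (r0 * pos m) / real p))"
  define b3 :: "real^'n" where "b3 = (\<chi> m. sin (2 * pi * real (r0 * pos m) / real p))"
  have "x \<in> span {b1, b2, b3}" if "x \<in> X" for x
  proof -
    (* read along the cycle, x becomes a p-periodic sequence and x \<mapsto> x \<circ> \<pi> becomes a translation *)
    have shifted: "\<exists>x'\<in>X. \<forall>q. x' $ e q = x $ e (q + t)" for t
      using shift e_step that by (rule shift_invariant_iterate)
    have rel_shifted: "c * (x $ e (t + pos i) - x $ e (t + pos j)) + d * (x $ e (t + pos k) - x $ e (t + pos l)) = 0"
      for t
      using shifted[of t] rel pos(2) by (metis add.commute)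
    have "\<exists>\<alpha> \<beta> \<gamma>. \<forall>q<p. x $ e q = \<alpha> + \<beta> * cos (2 * pi * real (r0 * q) / real p)
        + \<gamma> * sin (2 * pi * real (r0 * q) / real p)"
      by (rule trig) (simp_all add: e_periodic rel_shifted)
    then obtain \<alpha> \<beta> \<gamma> where "\<forall>q<p. x $ e q = \<alpha> + \<beta> * cos (2 * pi * real (r0 * q) / real p)
        + \<gamma> * sin (2 * pi * real (r0 * q) / real p)"
      by blast
    then have "x = \<alpha> *\<^sub>R b1 + \<beta> *\<^sub>R b2 + \<gamma> *\<^sub>R b3"
      using pos by (simp add: vec_eq_iff b1_def b2_def b3_def) metis
    then show ?thesis
      by (simp add: span_add span_scale span_base)
  qed
  then have "dim X \<le> card {b1, b2, b3}"
    by (intro dim_le_card) auto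
  also have "\<dots> \<le> 3"
    by (simp add: card_insert_le_m1)
  finally show ?thesis
    by simp
qed

lemma inner_perm_act:
  fixes a x :: "real^'n"
  assumes "g permutes UNIV"
  shows "a \<bullet> perm_act g x = (\<Sum>m\<in>UNIV. a $ g m * x $ m)"
proof -
  have "a \<bullet> perm_act g x = (\<Sum>m\<in>UNIV. a $ m * x $ inv g m)"
    by (simp add: inner_vec_def perm_act_def)
  also have "\<dots> = (\<Sum>m\<in>UNIV. a $ g m * x $ inv g (g m))"
    using sum.permute[OF assms, of "\<lambda>m. a $ m * x $ inv g m"] by simp
  also have "\<dots> = (\<Sum>m\<in>UNIV. a $ g m * x $ m)"
    using permutes_inverses(2)[OF assms] by simp
  finally show ?thesis .
qed

lemma inner_diff_perm_act_double_transpose: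
  fixes a x :: "real^'n"
  assumes "distinct [i, j, k, l]"
  shows "a \<bullet> x - a \<bullet> perm_act (Transposition.transpose i j \<circ> Transposition.transpose k l) x
    = (a $ i - a $ j) * (x $ i - x $ j) + (a $ k - a $ l) * (x $ k - x $ l)"
proof -
  let ?\<sigma> = "Transposition.transpose i j \<circ> Transposition.transpose k l"
  have "?\<sigma> permutes UNIV"
    by (intro permutes_compose permutes_swap_id) simp_all
  then have "a \<bullet> x - a \<bullet> perm_act ?\<sigma> x = (\<Sum>m\<in>UNIV. (a $ m - a $ ?\<sigma> m) * x $ m)"
    by (simp only: inner_perm_act) (simp add: inner_vec_def left_diff_distrib sum_subtractf)
  also have "\<dots> = (\<Sum>m\<in>{i, j, k, l}. (a $ m - a $ ?\<sigma> m) * x $ m)"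
    by (rule sum.mono_neutral_right) (auto simp: Transposition.transpose_def)
  also have "\<dots> = (a $ i - a $ j) * (x $ i - x $ j) + (a $ k - a $ l) * (x $ k - x $ l)"
  proof -
    have "i \<noteq> j" "i \<noteq> k" "i \<noteq> l" "j \<noteq> k" "j \<noteq> l" "k \<noteq> l"
      using assms by auto
    then show ?thesis
      by (simp add: Transposition.transpose_def algebra_simps)
  qed
  finally show ?thesis .
qed

lemma perm_act_id: "perm_act id v = v"
  by (simp add: perm_act_def vec_eq_iff)

lemma perm_act_inv_comp:
  assumes "bij \<pi>" "bij g"
  shows "perm_act (inv \<pi> \<circ> g) v = (\<chi> m. perm_act g v $ \<pi> m)"
  using assms by (simp add: perm_act_def vec_eq_iff o_inv_distrib bij_imp_bij_inv inv_inv_eq)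

lemma perm_orbit_self:
  assumes "perm_subgroup G"
  shows "v \<in> (\<lambda>g. perm_act g v) ` G"
  using assms image_eqI[of v "\<lambda>g. perm_act g v" id G] by (simp add: perm_subgroup_def perm_act_id)

lemma perm_orbit_shift:
  assumes G: "perm_subgroup G" "\<pi> \<in> G" and x: "x \<in> (\<lambda>g. perm_act g v) ` G"
  shows "(\<chi> m. x $ \<pi> m) \<in> (\<lambda>g. perm_act g v) ` G"
proof -
  obtain g where g: "g \<in> G" "x = perm_act g v"
    using x by blast
  have "bij \<pi>" "bij g"
    using G g(1) by (auto simp: perm_subgroup_def permutes_bij)
  then have "(\<chi> m. x $ \<pi> m) = perm_act (inv \<pi> \<circ> g) v"
    by (simp add: g(2) perm_act_inv_comp)
  moreover have "inv \<pi> \<circ> g \<in> G"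
    using G g(1) by (simp add: perm_subgroup_def)
  ultimately show ?thesis
    by simp
qed

theorem lemma4p6:
  fixes v a :: "real^'n" and G :: "('n \<Rightarrow> 'n) set" and \<pi> :: "'n \<Rightarrow> 'n"
    and i j k l :: 'n
  assumes "prime CARD('n)" and "CARD('n) \<ge> 5"
    and "inj (\<lambda>m. v $ m)"
    and "a \<noteq> 0"
    and "distinct [i, j, k, l]"
    and "full_cycle \<pi>"
    and "perm_subgroup G" and "\<pi> \<in> G"
    and "dim (span ((\<lambda>g. perm_act g v) ` G)) > 3"
    and "(\<lambda>g. perm_act g v) ` G \<subseteq> {x. a \<bullet> x = 0}"
    and "(\<lambda>g. perm_act (Transposition.transpose i j \<circ> Transposition.transpose k l) (perm_act g v)) ` G \<subseteq> {x. a \<bullet> x = 0}"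
  shows "a $ i = a $ j \<and> a $ k = a $ l"
proof -
  define X where "X = (\<lambda>g. perm_act g v) ` G"
  have shift: "(\<chi> m. x $ \<pi> m) \<in> X" if "x \<in> X" for x
    using assms(7,8) that unfolding X_def by (rule perm_orbit_shift)
  have rel: "(a $ i - a $ j) * (x $ i - x $ j) + (a $ k - a $ l) * (x $ k - x $ l) = 0" if "x \<in> X" for x
  proof -
    have "a \<bullet> x = 0" "a \<bullet> perm_act (Transposition.transpose i j \<circ> Transposition.transpose k l) x = 0"
      using that assms(10,11) by (auto simp: X_def)
    then show ?thesis
      using inner_diff_perm_act_double_transpose[OF assms(5), of a x] by simp
  qed
  show ?thesis
  proof (cases "a $ i = a $ j")
    case True
    have "v \<in> X"
      using assms(7) unfolding X_def by (rule perm_orbit_self)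
    moreover have "v $ k \<noteq> v $ l"
      using assms(3,5) by (auto dest: injD)
    ultimately show ?thesis
      using rel True by auto
  next
    case False
    then have "dim (span X) \<le> 3"
      using dim_span_shift_invariant_relation[OF assms(1,6,5) _ shift rel] by simp
    with assms(9) show ?thesis
      by (simp add: X_def)
  qed
qed

end
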